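(* Let $G$ be a connected graph with $\omega(G)\in\{n(G)-1,\,n(G)-2,\,n(G)-3\}$ and $n(G)\ge \omega(G)+1\ge 4$. Then $$\dim_l(G)\le \left(\frac{\omega(G)-2}{\omega(G)-1}\right) n(G).$$
   Context: All graphs are finite and simple. $n(G)$ is the number of vertices and $\omega(G)$ the clique number of $G$. For vertices $x,y$ of a connected graph $G$, $d_G(x,y)$ is the length of a shortest $x,y$-path. A vertex $w$ distinguishes vertices $u,v$ if $d_G(u,w)\neq d_G(v,w)$. A set $W\subseteq V(G)$ is a local resolving set of $G$ if for every pair of adjacent vertices $u,v\in V(G)\setminus W$ some vertex of $W$ distinguishes $u$ and $v$. The local metric dimension $\dim_l(G)$ is the minimum cardinality of a local resolving set of $G$. *)

theory Defs
  imports Complex_Main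
begin

definition simple_graph :: "'a set \<Rightarrow> ('a \<Rightarrow> 'a \<Rightarrow> bool) \<Rightarrow> bool" where
  "simple_graph V E \<longleftrightarrow> finite V \<and> (\<forall>u v. E u v \<longrightarrow> u \<in> V \<and> v \<in> V)
      \<and> (\<forall>u v. E u v \<longrightarrow> E v u) \<and> (\<forall>v. \<not> E v v)"

definition is_walk :: "'a set \<Rightarrow> ('a \<Rightarrow> 'a \<Rightarrow> bool) \<Rightarrow> 'a list \<Rightarrow> bool" where
  "is_walk V E xs \<longleftrightarrow> xs \<noteq> [] \<and> set xs \<subseteq> V \<and> (\<forall>i. Suc i < length xs \<longrightarrow> E (xs ! i) (xs ! Suc i))"

definition connected_graph :: "'a set \<Rightarrow> ('a \<Rightarrow> 'a \<Rightarrow> bool) \<Rightarrow> bool" where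
  "connected_graph V E \<longleftrightarrow> V \<noteq> {} \<and>
     (\<forall>u\<in>V. \<forall>v\<in>V. \<exists>xs. is_walk V E xs \<and> hd xs = u \<and> last xs = v)"

definition gdist :: "'a set \<Rightarrow> ('a \<Rightarrow> 'a \<Rightarrow> bool) \<Rightarrow> 'a \<Rightarrow> 'a \<Rightarrow> nat" where
  "gdist V E x y = (LEAST k. \<exists>xs. is_walk V E xs \<and> hd xs = x \<and> last xs = y \<and> length xs = Suc k)"

definition is_clique :: "'a set \<Rightarrow> ('a \<Rightarrow> 'a \<Rightarrow> bool) \<Rightarrow> 'a set \<Rightarrow> bool" where
  "is_clique V E K \<longleftrightarrow> K \<subseteq> V \<and> (\<forall>u\<in>K. \<forall>v\<in>K. u \<noteq> v \<longrightarrow> E u v)"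

definition clique_number :: "'a set \<Rightarrow> ('a \<Rightarrow> 'a \<Rightarrow> bool) \<Rightarrow> nat" where
  "clique_number V E = Max {card K | K. is_clique V E K}"

definition local_resolving_set :: "'a set \<Rightarrow> ('a \<Rightarrow> 'a \<Rightarrow> bool) \<Rightarrow> 'a set \<Rightarrow> bool" where
  "local_resolving_set V E W \<longleftrightarrow> W \<subseteq> V \<and>
     (\<forall>u\<in>V - W. \<forall>v\<in>V - W. E u v \<longrightarrow> (\<exists>w\<in>W. gdist V E u w \<noteq> gdist V E v w))"

definition local_metric_dim :: "'a set \<Rightarrow> ('a \<Rightarrow> 'a \<Rightarrow> bool) \<Rightarrow> nat" where
  "local_metric_dim V E = Min {card W | W. local_resolving_set V E W}"

end

theory Submission
  imports Defs
begin

text \<open>Adjacent vertices are at distance 1, so \<open>V - S\<close> is a local resolving set as soon as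
  every edge inside \<open>S\<close> is distinguished by a vertex outside \<open>S\<close> adjacent to exactly one of
  its ends; hence \<open>dim\<^sub>l(G) \<le> n - |S|\<close>. If \<open>\<omega> = n - 1\<close>, a non-edge is such an \<open>S\<close>.
  Otherwise every clique has at most \<open>n - 2\<close> vertices and there is such an \<open>S\<close> with three
  vertices: if no triple worked, then for a non-edge \<open>ab\<close> every non-neighbour of \<open>a\<close> would be
  a twin of \<open>b\<close> (and vice versa), a common neighbour of \<open>a\<close> and \<open>b\<close> (which connectivity
  provides) would be universal, and together these force \<open>V\<close> minus one vertex to be a clique.
  The bounds \<open>n - 2\<close> and \<open>n - 3\<close> are below \<open>(\<omega> - 2) n / (\<omega> - 1)\<close> because \<open>n \<le> \<omega> + 3\<close>
  and \<open>\<omega> \<ge> 3\<close>.\<close>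

lemma simple_graphD:
  assumes "simple_graph V E"
  shows "finite V" and "E u v \<Longrightarrow> u \<in> V" and "E u v \<Longrightarrow> v \<in> V"
    and "E u v \<Longrightarrow> E v u" and "\<not> E v v"
  using assms by (auto simp: simple_graph_def)

lemma not_is_walk_Nil [simp]: "\<not> is_walk V E []"
  by (simp add: is_walk_def)

lemma is_walk_singleton [simp]: "is_walk V E [x] \<longleftrightarrow> x \<in> V"
  by (simp add: is_walk_def)

lemma is_walk_Cons_Cons [simp]:
  "is_walk V E (x # y # ys) \<longleftrightarrow> x \<in> V \<and> E x y \<and> is_walk V E (y # ys)"
proof -
  have "(\<forall>i. Suc i < Suc (Suc n) \<longrightarrow> P i) \<longleftrightarrow> P 0 \<and> (\<forall>i. Suc i < Suc n \<longrightarrow> P (Suc i))"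
    for n and P :: "nat \<Rightarrow> bool"
    by (metis Suc_less_eq not0_implies_Suc zero_less_Suc)
  then show ?thesis
    unfolding is_walk_def by auto
qed

lemma walk_leaves_set:
  assumes "is_walk V E xs" "hd xs \<in> P" "last xs \<notin> P"
  shows "\<exists>u\<in>P. \<exists>v. v \<notin> P \<and> E u v"
  using assms
proof (induction xs rule: induct_list012)
  case (3 x y zs)
  then show ?case by (cases "y \<in> P") auto
qed simp_all

lemma gdist_eq_1_iff:
  assumes "connected_graph V E" "u \<in> V" "v \<in> V" "u \<noteq> v"
  shows "gdist V E u v = 1 \<longleftrightarrow> E u v"
proof -
  let ?walk = "\<lambda>k. \<exists>xs. is_walk V E xs \<and> hd xs = u \<and> last xs = v \<and> length xs = Suc k"
  have no_walk_0: "\<not> ?walk 0"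
    using assms(4) by (auto simp: length_Suc_conv)
  have walk_1: "?walk 1 \<longleftrightarrow> E u v"
  proof
    assume "?walk 1"
    then show "E u v" by (auto simp: length_Suc_conv)
  next
    assume "E u v"
    then show "?walk 1" using assms(2,3) by (intro exI[of _ "[u, v]"]) simp
  qed
  have "\<exists>k. ?walk k" \<comment> \<open>otherwise \<open>LEAST\<close> would be unspecified\<close>
  proof -
    obtain xs where "is_walk V E xs" "hd xs = u" "last xs = v"
      using assms(1-3) unfolding connected_graph_def by blast
    then show ?thesis
      by (intro exI[of _ "length xs - 1"]) (auto simp: is_walk_def)
  qed
  then have "?walk (gdist V E u v)"
    unfolding gdist_def by (rule LeastI_ex)
  moreover have "gdist V E u v = 1" if "?walk 1"
    unfolding gdist_def
  proof (rule Least_equality)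
    show "\<And>k. ?walk k \<Longrightarrow> 1 \<le> k"
      using no_walk_0 by (metis less_one not_less)
  qed (fact that)
  ultimately have "gdist V E u v = 1 \<longleftrightarrow> ?walk 1"
    by auto
  with walk_1 show ?thesis by simp
qed

definition edges_distinguished_outside :: "'a set \<Rightarrow> ('a \<Rightarrow> 'a \<Rightarrow> bool) \<Rightarrow> 'a set \<Rightarrow> bool" where
  "edges_distinguished_outside V E S \<longleftrightarrow> (\<forall>u\<in>S. \<forall>v\<in>S. E u v \<longrightarrow> (\<exists>x\<in>V - S. E x u \<noteq> E x v))"

lemma card_clique_le_clique_number:
  assumes "simple_graph V E" "is_clique V E K"
  shows "card K \<le> clique_number V E"
proof -
  have "{card K | K. is_clique V E K} \<subseteq> card ` Pow V"
    by (auto simp: is_clique_def)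
  then have "finite {card K | K. is_clique V E K}"
    using simple_graphD(1)[OF assms(1)] by (auto intro: finite_surj)
  then show ?thesis
    unfolding clique_number_def using assms(2) by (auto intro: Max_ge)
qed

lemma local_metric_dim_le:
  assumes "simple_graph V E" "local_resolving_set V E W"
  shows "local_metric_dim V E \<le> card W"
proof -
  have "{card W | W. local_resolving_set V E W} \<subseteq> card ` Pow V"
    by (auto simp: local_resolving_set_def)
  then have "finite {card W | W. local_resolving_set V E W}"
    using simple_graphD(1)[OF assms(1)] by (auto intro: finite_surj)
  then show ?thesis
    unfolding local_metric_dim_def using assms(2) by (auto intro: Min_le)
qed

lemma local_resolving_set_Diff:
  assumes "simple_graph V E" "connected_graph V E" "edges_distinguished_outside V E S"
  shows "local_resolving_set V E (V - S)"
  unfolding local_resolving_set_def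
proof (intro conjI ballI impI)
  fix u v assume u: "u \<in> V - (V - S)" and v: "v \<in> V - (V - S)" and "E u v"
  then obtain x where x: "x \<in> V - S" "E x u \<noteq> E x v"
    using assms(3) unfolding edges_distinguished_outside_def by blast
  have "gdist V E u x = 1 \<longleftrightarrow> E x u" "gdist V E v x = 1 \<longleftrightarrow> E x v"
    using gdist_eq_1_iff[OF assms(2)] simple_graphD(4)[OF assms(1)] u v x by blast+
  with x show "\<exists>w\<in>V - S. gdist V E u w \<noteq> gdist V E v w"
    by metis
qed blast

lemma local_metric_dim_le_card_Diff:
  assumes "simple_graph V E" "connected_graph V E" "S \<subseteq> V" "edges_distinguished_outside V E S"
  shows "local_metric_dim V E + card S \<le> card V"
proof -
  have "local_metric_dim V E \<le> card (V - S)"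
    using assms by (intro local_metric_dim_le local_resolving_set_Diff)
  moreover have "card (V - S) + card S = card V"
    using assms(3) simple_graphD(1)[OF assms(1)] by (metis card_Diff_subset finite_subset le_add_diff_inverse2 card_mono)
  ultimately show ?thesis by linarith
qed

definition non_neighbours :: "'a set \<Rightarrow> ('a \<Rightarrow> 'a \<Rightarrow> bool) \<Rightarrow> 'a \<Rightarrow> 'a set" where
  "non_neighbours V E v = {x \<in> V. x \<noteq> v \<and> \<not> E x v}"

lemma clique_Un_universal:
  assumes "simple_graph V E" "is_clique V E K" "U \<subseteq> V"
    and "\<And>u z. u \<in> U \<Longrightarrow> z \<in> V \<Longrightarrow> z \<noteq> u \<Longrightarrow> E z u"
  shows "is_clique V E (K \<union> U)"
  using assms unfolding is_clique_def by (auto dest: simple_graphD(4)[OF assms(1)])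

context
  fixes V :: "'a set" and E :: "'a \<Rightarrow> 'a \<Rightarrow> bool"
  assumes simple: "simple_graph V E"
    and no_triple: "\<And>S. S \<subseteq> V \<Longrightarrow> card S = 3 \<Longrightarrow> \<not> edges_distinguished_outside V E S"
begin

lemma triple_twin_edge:
  assumes "a \<in> V" "b \<in> V" "c \<in> V" "a \<noteq> b" "a \<noteq> c" "b \<noteq> c"
  shows "\<exists>u\<in>{a, b, c}. \<exists>v\<in>{a, b, c}. E u v \<and> (\<forall>x\<in>V - {a, b, c}. E x u = E x v)"
  using no_triple[of "{a, b, c}"] assms unfolding edges_distinguished_outside_def by auto

lemma no_independent_triple:
  assumes "a \<in> V" "b \<in> V" "c \<in> V" "a \<noteq> b" "a \<noteq> c" "b \<noteq> c" "\<not> E a b" "\<not> E a c"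
  shows "E b c"
  using triple_twin_edge[OF assms(1-6)] assms(7,8) simple_graphD(4,5)[OF simple] by blast

lemma non_neighbours_clique:
  assumes "v \<in> V"
  shows "is_clique V E (non_neighbours V E v)"
  unfolding is_clique_def non_neighbours_def
  using no_independent_triple[OF assms] simple_graphD(4)[OF simple] by blast

lemma non_neighbour_twin:
  assumes "a \<in> V" "b \<in> V" "a \<noteq> b" "\<not> E a b" "y \<in> non_neighbours V E a"
    and "z \<in> V" "z \<noteq> y" "z \<noteq> b"
  shows "E z y \<longleftrightarrow> E z b"
proof (cases "y = b")
  case False
  have y: "y \<in> V" "y \<noteq> a" "\<not> E a y"
    using assms(5) simple_graphD(4)[OF simple] unfolding non_neighbours_def by auto
  then have "E b y"
    using no_independent_triple[OF assms(1,2) y(1) assms(3)] False assms(4) by auto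
  have "\<forall>x\<in>V - {a, b, y}. E x b = E x y"
    using triple_twin_edge[OF assms(1,2) y(1) assms(3)] False y assms(4)
      simple_graphD(4,5)[OF simple] by blast
  then show ?thesis
    using assms(4,6-8) y(3) simple_graphD(4)[OF simple] by blast
qed simp

lemma common_neighbour_universal:
  assumes "a \<in> V" "b \<in> V" "a \<noteq> b" "\<not> E a b" "E c a" "E c b"
    and "z \<in> V" "z \<noteq> c"
  shows "E z c"
proof (rule ccontr)
  assume "\<not> E z c"
  have c: "c \<in> V" "c \<noteq> a" "c \<noteq> b"
    using assms(5,6) simple_graphD(2,5)[OF simple] by auto
  have "z \<notin> non_neighbours V E a"
    using non_neighbour_twin[OF assms(1-4) _ c(1) _ c(3)] \<open>\<not> E z c\<close> assms(6,8)
      simple_graphD(4)[OF simple] by blast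
  moreover have "z \<notin> non_neighbours V E b"
    using non_neighbour_twin[OF assms(2,1) _ _ _ c(1) _ c(2)] \<open>\<not> E z c\<close> assms(3-5,8)
      simple_graphD(4)[OF simple] by blast
  moreover have "z \<noteq> a" "z \<noteq> b"
    using \<open>\<not> E z c\<close> assms(5,6) simple_graphD(4)[OF simple] by auto
  ultimately have "E z a" "E z b"
    using assms(7) unfolding non_neighbours_def by auto
  then show False
    using triple_twin_edge[OF assms(1,2) c(1) assms(3) c(2,3)[symmetric]] \<open>\<not> E z c\<close>
      assms(4,7,8) \<open>z \<noteq> a\<close> \<open>z \<noteq> b\<close> simple_graphD(4,5)[OF simple] by blast
qed

lemma common_neighbour_exists:
  assumes "connected_graph V E" "a \<in> V" "b \<in> V" "a \<noteq> b" "\<not> E a b"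
  shows "\<exists>c. E c a \<and> E c b"
proof -
  obtain xs where "is_walk V E xs" "hd xs = a" "last xs = b"
    using assms(1-3) unfolding connected_graph_def by blast
  moreover have "a \<in> non_neighbours V E b" "b \<notin> non_neighbours V E b"
    using assms(2,4,5) unfolding non_neighbours_def by auto
  ultimately obtain u c where
    u: "u \<in> non_neighbours V E b" and c: "c \<notin> non_neighbours V E b" and "E u c"
    by (metis walk_leaves_set)
  have "u \<in> V" "u \<noteq> c" "u \<noteq> b" "\<not> E u b" "c \<in> V"
    using u c \<open>E u c\<close> simple_graphD(3)[OF simple] unfolding non_neighbours_def by auto
  then have "c \<notin> non_neighbours V E a"
    using non_neighbour_twin[OF assms(2-5), of c u] \<open>E u c\<close> by auto
  then have "E c a" "E c b"
    using c \<open>c \<in> V\<close> \<open>E u c\<close> \<open>\<not> E u b\<close> u assms(5)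
    unfolding non_neighbours_def by auto
  then show ?thesis by blast
qed

lemma non_neighbours_eq_singleton:
  assumes "a \<in> V" "b \<in> V" "a \<noteq> b" "\<not> E a b" "E c a" "E c b"
  shows "non_neighbours V E b = {a} \<or> non_neighbours V E a = {b}"
proof (rule ccontr)
  have "a \<in> non_neighbours V E b" "b \<in> non_neighbours V E a"
    using assms(1-4) simple_graphD(4)[OF simple] unfolding non_neighbours_def by auto
  moreover assume "\<not> ?thesis"
  ultimately obtain x y where
    x: "x \<in> non_neighbours V E b" "x \<noteq> a" and y: "y \<in> non_neighbours V E a" "y \<noteq> b"
    by blast
  have c: "c \<in> V" "c \<noteq> a" "c \<noteq> b"
    using assms(5,6) simple_graphD(2,5)[OF simple] by auto
  have "x \<in> V - {a, b, c}" "E x c" "\<not> E x b"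
    using x assms(6) common_neighbour_universal[OF assms] unfolding non_neighbours_def by auto
  moreover have "y \<in> V - {a, b, c}" "E y c" "\<not> E y a"
    using y assms(5) common_neighbour_universal[OF assms] unfolding non_neighbours_def by auto
  ultimately show False
    using triple_twin_edge[OF assms(1,2) c(1) assms(3) c(2,3)[symmetric]] assms(4)
      simple_graphD(4,5)[OF simple] by blast
qed

lemma clique_Diff_singleton:
  assumes "a \<in> V" "b \<in> V" "a \<noteq> b" "\<not> E a b" "E c a" "E c b"
    and "non_neighbours V E b = {a}"
  shows "is_clique V E (V - {a})"
proof -
  let ?U = "{u \<in> V. E u a \<and> E u b}"
  have "is_clique V E (non_neighbours V E a \<union> ?U)"
  proof (rule clique_Un_universal[OF simple non_neighbours_clique[OF assms(1)]])
    show "\<And>u z. u \<in> ?U \<Longrightarrow> z \<in> V \<Longrightarrow> z \<noteq> u \<Longrightarrow> E z u"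
      using common_neighbour_universal[OF assms(1-4)] by blast
  qed auto
  moreover have "V - {a} = non_neighbours V E a \<union> ?U"
    using assms(1-4,7) simple_graphD(4,5)[OF simple] unfolding non_neighbours_def by auto
  ultimately show ?thesis by simp
qed

end

lemma exists_edges_distinguished_triple:
  assumes "simple_graph V E" "connected_graph V E"
    and "\<And>K. is_clique V E K \<Longrightarrow> card K + 2 \<le> card V"
  shows "\<exists>S\<subseteq>V. card S = 3 \<and> edges_distinguished_outside V E S"
proof (rule ccontr)
  assume "\<not> ?thesis"
  then have no_triple: "\<And>S. S \<subseteq> V \<Longrightarrow> card S = 3 \<Longrightarrow> \<not> edges_distinguished_outside V E S"
    by blast
  have "\<not> is_clique V E V"
    using assms(3) by fastforce
  then obtain a b where ab: "a \<in> V" "b \<in> V" "a \<noteq> b" "\<not> E a b"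
    unfolding is_clique_def by blast
  obtain c where "E c a" "E c b"
    using common_neighbour_exists[OF assms(1) no_triple assms(2) ab] by blast
  then obtain v where "v \<in> V" "is_clique V E (V - {v})"
    using non_neighbours_eq_singleton[OF assms(1) no_triple ab] ab
      clique_Diff_singleton[OF assms(1) no_triple, of a b c]
      clique_Diff_singleton[OF assms(1) no_triple, of b a c] simple_graphD(4)[OF assms(1)]
    by metis
  then show False
    using assms(3)[of "V - {v}"] simple_graphD(1)[OF assms(1)] by (simp add: card_Diff_singleton)
qed

lemma real_le_ratio_mult:
  fixes d k n w :: nat
  assumes "2 \<le> w" "d + k \<le> n" "n \<le> k * (w - 1)"
  shows "real d \<le> (real w - 2) / (real w - 1) * real n"
proof -
  have "real d * (real w - 1) \<le> (real n - real k) * (real w - 1)"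
    using assms(1,2) by (intro mult_right_mono) auto
  also have "\<dots> \<le> (real w - 2) * real n"
  proof -
    have "real n \<le> real (k * (w - 1))"
      using assms(3) by (simp only: of_nat_le_iff)
    then have "real n \<le> real k * (real w - 1)"
      using assms(1) by (simp add: of_nat_diff)
    then show ?thesis by (simp add: algebra_simps)
  qed
  finally have "real d * (real w - 1) \<le> (real w - 2) * real n" .
  moreover have "real w - 1 > 0"
    using assms(1) by simp
  ultimately show ?thesis
    by (subst times_divide_eq_left) (simp add: pos_le_divide_eq)
qed

theorem corollary3p2:
  fixes V :: "'a set" and E :: "'a \<Rightarrow> 'a \<Rightarrow> bool"
  assumes "simple_graph V E" and "connected_graph V E"
    and "clique_number V E \<in> {card V - 1, card V - 2, card V - 3}"
    and "card V \<ge> clique_number V E + 1" and "clique_number V E + 1 \<ge> 4"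
  shows "real (local_metric_dim V E)
           \<le> ((real (clique_number V E) - 2) / (real (clique_number V E) - 1)) * real (card V)"
proof -
  let ?w = "clique_number V E" and ?n = "card V"
  have cliques: "\<And>K. is_clique V E K \<Longrightarrow> card K \<le> ?w"
    using card_clique_le_clique_number[OF assms(1)] .
  have n_cases: "?n = ?w + 1 \<or> ?n = ?w + 2 \<or> ?n = ?w + 3"
    using assms(3-5) by auto
  obtain S where S: "S \<subseteq> V" "edges_distinguished_outside V E S" "?n \<le> card S * (?w - 1)"
  proof (cases "?n = ?w + 1")
    case True
    have "\<not> is_clique V E V"
      using cliques[of V] assms(4) by linarith
    then obtain a b where ab: "a \<in> V" "b \<in> V" "a \<noteq> b" "\<not> E a b"
      unfolding is_clique_def by blast
    then have "edges_distinguished_outside V E {a, b}"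
      using simple_graphD(4,5)[OF assms(1)] by (auto simp: edges_distinguished_outside_def)
    moreover have "?n \<le> card {a, b} * (?w - 1)"
      using True assms(5) ab(3) by simp
    ultimately show ?thesis
      using ab(1,2) by (intro that[of "{a, b}"]) auto
  next
    case False
    have "card K + 2 \<le> ?n" if "is_clique V E K" for K
      using cliques[OF that] False n_cases by linarith
    then obtain S where "S \<subseteq> V" "card S = 3" "edges_distinguished_outside V E S"
      using exists_edges_distinguished_triple[OF assms(1,2)] by blast
    moreover have "?n \<le> 3 * (?w - 1)"
      using n_cases assms(5) by linarith
    ultimately show ?thesis
      by (intro that[of S]) simp_all
  qed
  then have "local_metric_dim V E + card S \<le> ?n"
    using local_metric_dim_le_card_Diff[OF assms(1,2)] by blast
  then show ?thesis
    using assms(5) by (intro real_le_ratio_mult[OF _ _ S(3)]) simp_all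
qed

end
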